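(* Let $X$ be a normal space and $i_X\colon A\hookrightarrow X$ a cofibration. Assume that $\{U_0,\ldots,U_n\}$ is an open cover of $X$ such that: $A\subseteq U_0$ and there is a homotopy $H_0\colon U_0\times[0,1]\to X$ with $H_0(x,0)=x$, $H_0(x,1)\in A$ for all $x\in U_0$, and the map $H_0(-,1)|_A\colon A\to A$ is homotopic to $1_A$; and for each $i\ge1$, $U_i\cap A=\varnothing$ and there is a homotopy $H_i\colon U_i\times[0,1]\to X$ with $H_i(x,0)=x$ and $H_i(x,1)\in A$ for all $x\in U_i$. Then $\mathrm{relcat}(i_X)\le n$.
   Context: Relative category (Doeraene–El Haouari): for a map $i_X\colon A\to X$, define Ganea maps $g_n\colon G_n(i_X)\to X$ inductively by $g_0=i_X$, and $G_n(i_X)$ the join of $i_X$ and $g_{n-1}$ over $X$, i.e. the homotopy pushout of the two projections from the homotopy pullback of $i_X$ and $g_{n-1}$, with $g_n$ the induced (whisker) map to $X$ and $\alpha_n\colon A\to G_n(i_X)$ the canonical map. Then $\mathrm{relcat}(i_X)$ is the least $n\ge0$ such that $g_n$ admits a homotopy section $\sigma\colon X\to G_n(i_X)$ with $\sigma\circ i_X\simeq\alpha_n$. *)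

theory Defs
  imports "HOL-Analysis.Analysis" "HOL-Library.Extended_Nat"
begin

definition hep_into :: "'a topology \<Rightarrow> 'a set \<Rightarrow> 'b topology \<Rightarrow> bool" where
  "hep_into X A Y \<longleftrightarrow>
     (\<forall>f h. continuous_map X Y f \<and>
            continuous_map (prod_topology (subtopology X A) (top_of_set {0..1::real})) Y h \<and>
            (\<forall>a\<in>A. h (a, 0) = f a)
       \<longrightarrow> (\<exists>H. continuous_map (prod_topology X (top_of_set {0..1::real})) Y H \<and>
                (\<forall>x\<in>topspace X. H (x, 0) = f x) \<and>
                (\<forall>a\<in>A. \<forall>t\<in>{0..1}. H (a, t) = h (a, t))))"

text \<open>The inclusion of A into X is a cofibration: HEP for all target spaces whose points
  live in the type of X times reals (this type is large enough to contain the mapping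
  cylinder, the universal test space, so this is equivalent to HEP for all spaces).\<close>
definition cofibration :: "'a topology \<Rightarrow> 'a set \<Rightarrow> bool" where
  "cofibration X A \<longleftrightarrow> A \<subseteq> topspace X \<and> (\<forall>Y :: ('a \<times> real) topology. hep_into X A Y)"

text \<open>Points of the Ganea spaces G_n: points of A (the A-end of the double mapping
  cylinder), points of G_(n-1) (the other end), and interior points of the cylinder on
  the homotopy pullback: (a, gamma, p, t) with 0 < t < 1.\<close>
datatype 'a gpt = Pt 'a | Up "'a gpt" | Mid 'a "real \<Rightarrow> 'a" "'a gpt" real

primrec gmap :: "'a gpt \<Rightarrow> 'a" where
  "gmap (Pt a) = a"
| "gmap (Up p) = gmap p"
| "gmap (Mid a \<gamma> p t) = \<gamma> t"

text \<open>Free path space of X with the compact-open topology (paths are normalised to be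
  undefined outside [0,1]).\<close>
definition paths_of :: "'a topology \<Rightarrow> (real \<Rightarrow> 'a) set" where
  "paths_of X = {\<gamma>. continuous_map (top_of_set {0..1::real}) X \<gamma> \<and> \<gamma> \<in> extensional {0..1}}"

definition path_top :: "'a topology \<Rightarrow> (real \<Rightarrow> 'a) topology" where
  "path_top X = topology_generated_by
     {{\<gamma> \<in> paths_of X. \<gamma> ` K \<subseteq> U} | K U. compact K \<and> K \<subseteq> {0..1} \<and> openin X U}"

definition hpb_top :: "'a topology \<Rightarrow> 'a set \<Rightarrow> 'a gpt topology
                        \<Rightarrow> ('a \<times> (real \<Rightarrow> 'a) \<times> 'a gpt) topology" where
  "hpb_top X A G = subtopology (prod_topology (subtopology X A) (prod_topology (path_top X) G))
      {(a, \<gamma>, p). \<gamma> 0 = a \<and> \<gamma> 1 = gmap p}"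

definition cyl_cls :: "('a \<times> (real \<Rightarrow> 'a) \<times> 'a gpt) \<times> real \<Rightarrow> 'a gpt" where
  "cyl_cls w = (case w of ((a, \<gamma>, p), t) \<Rightarrow>
      if t = 0 then Pt a else if t = 1 then Up p else Mid a \<gamma> p t)"

text \<open>Fibrewise join of the inclusion of A and gmap on G over X: the double mapping cylinder
  (homotopy pushout) of the two projections from the homotopy pullback, with the quotient
  topology of the disjoint union of A, (pullback x [0,1]) and G.  The family of open sets
  below is already a topology, so the generated topology is exactly this family.\<close>
definition join_top :: "'a topology \<Rightarrow> 'a set \<Rightarrow> 'a gpt topology \<Rightarrow> 'a gpt topology" where
  "join_top X A G = topology_generated_by
     {U. U \<subseteq> Pt ` A \<union> Up ` topspace G \<union> cyl_cls ` topspace (prod_topology (hpb_top X A G) (top_of_set {0..1::real}))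
       \<and> openin (subtopology X A) {a \<in> A. Pt a \<in> U}
       \<and> openin G {p \<in> topspace G. Up p \<in> U}
       \<and> openin (prod_topology (hpb_top X A G) (top_of_set {0..1::real}))
            {w \<in> topspace (prod_topology (hpb_top X A G) (top_of_set {0..1::real})). cyl_cls w \<in> U}}"

text \<open>The Ganea spaces G_n(i_X); G_0 is a copy of A (via Pt), and alpha_n = Pt.\<close>
primrec ganea_top :: "'a topology \<Rightarrow> 'a set \<Rightarrow> nat \<Rightarrow> 'a gpt topology" where
  "ganea_top X A 0 = topology_generated_by
      {U. U \<subseteq> Pt ` A \<and> openin (subtopology X A) {a \<in> A. Pt a \<in> U}}"
| "ganea_top X A (Suc n) = join_top X A (ganea_top X A n)"

definition ganea_section :: "'a topology \<Rightarrow> 'a set \<Rightarrow> nat \<Rightarrow> bool" where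
  "ganea_section X A n \<longleftrightarrow>
     (\<exists>\<sigma>. continuous_map X (ganea_top X A n) \<sigma> \<and>
          homotopic_with (\<lambda>_. True) X X (gmap \<circ> \<sigma>) id \<and>
          homotopic_with (\<lambda>_. True) (subtopology X A) (ganea_top X A n) \<sigma> Pt)"

definition relcat :: "'a topology \<Rightarrow> 'a set \<Rightarrow> enat" where
  "relcat X A = (INF n \<in> {n. ganea_section X A n}. enat n)"

end

theory Submission
  imports Defs
begin

text \<open>
  The homotopy section of g_n is built one open set of the cover at a time.  Suppose s is a
  section of g_m over an open set W, up to a homotopy K from the inclusion to g_m o s, and H
  deforms a further open set U into A.  A point x is sent to the point of the join with A-end
  H(x,1), G-end s x, the path that runs back along H and then along K, and as cylinder
  coordinate an Urysohn function that vanishes outside W and is 1 on a given closed F in W; this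
  is a section of g_(m+1) over a neighbourhood of C and F for any closed C in U.  Normality
  lets the cover be shrunk to closed sets, so that the induction goes through.  Attaching U_0 last,
  the section equals alpha_n o H_0(-,1) on A, which is homotopic to alpha_n by hypothesis.
\<close>

lemma continuous_map_on_Union_openin:
  assumes "\<And>T. T \<in> \<T> \<Longrightarrow> openin X T"
    and "\<And>T. T \<in> \<T> \<Longrightarrow> continuous_map (subtopology X T) Y f"
  shows "continuous_map (subtopology X (\<Union>\<T>)) Y f"
proof (rule pasting_lemma[where I = \<T> and T = "\<lambda>T. T" and f = "\<lambda>_. f"])
  show "openin (subtopology X (\<Union>\<T>)) T" if "T \<in> \<T>" for T
    using assms(1) that by (intro subset_openin_subtopology) auto
  show "continuous_map (subtopology (subtopology X (\<Union>\<T>)) T) Y f" if "T \<in> \<T>" for T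
    using assms(2) that by (simp add: subtopology_subtopology Int_absorb1 Union_upper)
qed auto

lemma continuous_map_prod_on_Union_openin:
  assumes "\<And>T. T \<in> \<T> \<Longrightarrow> openin X T"
    and "\<And>T. T \<in> \<T> \<Longrightarrow> continuous_map (prod_topology (subtopology X T) Z) Y f"
  shows "continuous_map (prod_topology (subtopology X (\<Union>\<T>)) Z) Y f"
proof -
  have "\<Union>\<T> \<times> topspace Z = \<Union>((\<lambda>T. T \<times> topspace Z) ` \<T>)"
    by blast
  then have "continuous_map (subtopology (prod_topology X Z) (\<Union>\<T> \<times> topspace Z)) Y f"
    using assms by (auto intro!: continuous_map_on_Union_openin simp: openin_prod_Times_iff prod_topology_subtopology)
  then show ?thesis
    by (simp add: prod_topology_subtopology)
qed

lemma continuous_map_prod_subtopology_mono: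
  assumes "continuous_map (prod_topology (subtopology X U) Z) Y f" and "S \<subseteq> U"
  shows "continuous_map (prod_topology (subtopology X S) Z) Y f"
  using assms by (auto simp: prod_topology_subtopology intro: continuous_map_from_subtopology_mono)

definition join_carrier :: "'a topology \<Rightarrow> 'a set \<Rightarrow> 'a gpt topology \<Rightarrow> 'a gpt set" where
  "join_carrier X A G =
     Pt ` A \<union> Up ` topspace G \<union> cyl_cls ` topspace (prod_topology (hpb_top X A G) (top_of_set {0..1::real}))"

definition join_opens :: "'a topology \<Rightarrow> 'a set \<Rightarrow> 'a gpt topology \<Rightarrow> 'a gpt set set" where
  "join_opens X A G =
     {U. U \<subseteq> join_carrier X A G
       \<and> openin (subtopology X A) {a \<in> A. Pt a \<in> U}
       \<and> openin G {p \<in> topspace G. Up p \<in> U}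
       \<and> openin (prod_topology (hpb_top X A G) (top_of_set {0..1::real}))
            {w \<in> topspace (prod_topology (hpb_top X A G) (top_of_set {0..1::real})). cyl_cls w \<in> U}}"

lemma join_top_alt: "join_top X A G = topology_generated_by (join_opens X A G)"
  by (simp add: join_top_def join_opens_def join_carrier_def)

lemma join_carrier_in_join_opens:
  assumes "A \<subseteq> topspace X"
  shows "join_carrier X A G \<in> join_opens X A G"
proof -
  let ?W = "topspace (prod_topology (hpb_top X A G) (top_of_set {0..1::real}))"
  have "{a \<in> A. Pt a \<in> join_carrier X A G} = topspace (subtopology X A)"
    using assms by (auto simp: join_carrier_def)
  moreover have "{p \<in> topspace G. Up p \<in> join_carrier X A G} = topspace G"
    by (auto simp: join_carrier_def)
  moreover have "{w \<in> ?W. cyl_cls w \<in> join_carrier X A G} = ?W"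
    by (auto simp: join_carrier_def)
  ultimately show ?thesis
    unfolding join_opens_def by (simp only: mem_Collect_eq openin_topspace) simp
qed

lemma continuous_map_Pt_join_top:
  assumes "A \<subseteq> topspace X"
  shows "continuous_map (subtopology X A) (join_top X A G) Pt"
  unfolding join_top_alt
proof (rule continuous_on_generated_topo)
  show "Pt ` topspace (subtopology X A) \<subseteq> \<Union>(join_opens X A G)"
    using join_carrier_in_join_opens[OF assms, of G] by (auto simp: join_carrier_def)
  fix V assume "V \<in> join_opens X A G"
  moreover have "Pt -` V \<inter> topspace (subtopology X A) = {a \<in> A. Pt a \<in> V}"
    using assms by auto
  ultimately show "openin (subtopology X A) (Pt -` V \<inter> topspace (subtopology X A))"
    by (simp add: join_opens_def)
qed

lemma continuous_map_Up_join_top: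
  assumes "A \<subseteq> topspace X"
  shows "continuous_map G (join_top X A G) Up"
  unfolding join_top_alt
proof (rule continuous_on_generated_topo)
  show "Up ` topspace G \<subseteq> \<Union>(join_opens X A G)"
    using join_carrier_in_join_opens[OF assms, of G] by (auto simp: join_carrier_def)
  fix V assume "V \<in> join_opens X A G"
  moreover have "Up -` V \<inter> topspace G = {p \<in> topspace G. Up p \<in> V}"
    by auto
  ultimately show "openin G (Up -` V \<inter> topspace G)"
    by (simp add: join_opens_def)
qed

lemma continuous_map_cyl_cls_join_top:
  assumes "A \<subseteq> topspace X"
  shows "continuous_map (prod_topology (hpb_top X A G) (top_of_set {0..1::real})) (join_top X A G) cyl_cls"
  unfolding join_top_alt
proof (rule continuous_on_generated_topo)
  let ?W = "prod_topology (hpb_top X A G) (top_of_set {0..1::real})"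
  show "cyl_cls ` topspace ?W \<subseteq> \<Union>(join_opens X A G)"
    using join_carrier_in_join_opens[OF assms, of G] by (auto simp: join_carrier_def)
  fix V assume "V \<in> join_opens X A G"
  moreover have "cyl_cls -` V \<inter> topspace ?W = {w \<in> topspace ?W. cyl_cls w \<in> V}"
    by auto
  ultimately show "openin ?W (cyl_cls -` V \<inter> topspace ?W)"
    by (simp add: join_opens_def)
qed

lemma continuous_map_Pt_ganea_top:
  assumes "A \<subseteq> topspace X"
  shows "continuous_map (subtopology X A) (ganea_top X A n) Pt"
proof (cases n)
  case 0
  let ?S = "{U. U \<subseteq> Pt ` A \<and> openin (subtopology X A) {a \<in> A. Pt a \<in> U}}"
  have "{a \<in> A. Pt a \<in> Pt ` A} = topspace (subtopology X A)"
    using assms by auto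
  then have "Pt ` A \<in> ?S"
    by (simp only: mem_Collect_eq openin_topspace) simp
  moreover have "Pt -` V \<inter> topspace (subtopology X A) = {a \<in> A. Pt a \<in> V}" for V
    using assms by auto
  ultimately have "continuous_map (subtopology X A) (topology_generated_by ?S) Pt"
    by (intro continuous_on_generated_topo) auto
  then show ?thesis
    using 0 by simp
next
  case (Suc m)
  then show ?thesis
    using continuous_map_Pt_join_top[OF assms] by simp
qed

lemma restrict_slice_in_paths_of:
  assumes "continuous_map (prod_topology Z (top_of_set {0..1::real})) X F" and "z \<in> topspace Z"
  shows "restrict (\<lambda>u. F (z, u)) {0..1} \<in> paths_of X"
proof -
  have "continuous_map (top_of_set {0..1::real}) (prod_topology Z (top_of_set {0..1::real})) (\<lambda>u. (z, u))"
    using assms(2) by (simp add: continuous_map_paired)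
  then have "continuous_map (top_of_set {0..1::real}) X (\<lambda>u. F (z, u))"
    using continuous_map_compose[OF _ assms(1)] by (simp add: o_def)
  then have "continuous_map (top_of_set {0..1::real}) X (restrict (\<lambda>u. F (z, u)) {0..1})"
    by (rule continuous_map_eq) auto
  then show ?thesis
    by (simp add: paths_of_def)
qed

text \<open>Openness of the preimage of a subbasic open set is the tube lemma.\<close>

lemma continuous_map_path_top_adjoint:
  assumes F: "continuous_map (prod_topology Z (top_of_set {0..1::real})) X F"
  shows "continuous_map Z (path_top X) (\<lambda>z. restrict (\<lambda>u. F (z, u)) {0..1})"
  unfolding path_top_def
proof (rule continuous_on_generated_topo)
  let ?S = "{{\<gamma> \<in> paths_of X. \<gamma> ` K \<subseteq> U} | K U. compact K \<and> K \<subseteq> {0..1} \<and> openin X U}"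
  have "paths_of X \<in> ?S"
    by (rule CollectI, rule exI[of _ "{}"], rule exI[of _ "topspace X"]) auto
  then show "(\<lambda>z. restrict (\<lambda>u. F (z, u)) {0..1}) ` topspace Z \<subseteq> \<Union>?S"
    using restrict_slice_in_paths_of[OF F] by blast
  fix V assume "V \<in> ?S"
  then obtain K U where V: "V = {\<gamma> \<in> paths_of X. \<gamma> ` K \<subseteq> U}"
    and K: "compact K" "K \<subseteq> {0..1}" and U: "openin X U"
    by blast
  let ?N = "{p \<in> topspace (prod_topology Z (top_of_set {0..1::real})). F p \<in> U}"
  have eq: "(\<lambda>z. restrict (\<lambda>u. F (z, u)) {0..1}) -` V \<inter> topspace Z = {z \<in> topspace Z. {z} \<times> K \<subseteq> ?N}"
    using K(2) restrict_slice_in_paths_of[OF F] by (auto simp: V image_subset_iff)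
  have N: "openin (prod_topology Z (top_of_set {0..1::real})) ?N"
    using openin_continuous_map_preimage[OF F U] .
  have Kc: "compactin (top_of_set {0..1::real}) K"
    using K by (simp add: compactin_subtopology)
  show "openin Z ((\<lambda>z. restrict (\<lambda>u. F (z, u)) {0..1}) -` V \<inter> topspace Z)"
    unfolding eq
  proof (subst openin_subopen, intro ballI)
    fix z assume "z \<in> {z \<in> topspace Z. {z} \<times> K \<subseteq> ?N}"
    then obtain Z' J where "openin Z Z'" "openin (top_of_set {0..1::real}) J" "z \<in> Z'" "K \<subseteq> J" "Z' \<times> J \<subseteq> ?N"
      using tube_lemma_right[OF N Kc, of z] by auto
    then show "\<exists>T. openin Z T \<and> z \<in> T \<and> T \<subseteq> {z \<in> topspace Z. {z} \<times> K \<subseteq> ?N}"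
      by (intro exI[of _ Z']) (auto dest: openin_subset)
  qed
qed

definition deforms_into :: "'a topology \<Rightarrow> 'a set \<Rightarrow> 'a set \<Rightarrow> ('a \<times> real \<Rightarrow> 'a) \<Rightarrow> bool" where
  "deforms_into X A U H \<longleftrightarrow>
     continuous_map (prod_topology (subtopology X U) (top_of_set {0..1::real})) X H \<and>
     (\<forall>x\<in>U. H (x, 0) = x \<and> H (x, 1) \<in> A)"

definition homotopy_section_on ::
    "'a topology \<Rightarrow> 'a gpt topology \<Rightarrow> 'a set \<Rightarrow> ('a \<Rightarrow> 'a gpt) \<Rightarrow> ('a \<times> real \<Rightarrow> 'a) \<Rightarrow> bool" where
  "homotopy_section_on X G V s K \<longleftrightarrow>
     continuous_map (subtopology X V) G s \<and>
     continuous_map (prod_topology (subtopology X V) (top_of_set {0..1::real})) X K \<and>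
     (\<forall>x\<in>V. K (x, 0) = x \<and> K (x, 1) = gmap (s x))"

lemma continuous_map_deforms_into_end:
  assumes "deforms_into X A U H" and "S \<subseteq> U"
  shows "continuous_map (subtopology X S) (subtopology X A) (\<lambda>x. H (x, 1))"
proof -
  have H: "continuous_map (prod_topology (subtopology X U) (top_of_set {0..1::real})) X H"
    using assms(1) by (simp add: deforms_into_def)
  have "continuous_map (subtopology X S) (prod_topology (subtopology X U) (top_of_set {0..1::real})) (\<lambda>x. (x, 1))"
    using assms(2) by (auto simp: continuous_map_paired continuous_map_in_subtopology continuous_map_from_subtopology)
  then have "continuous_map (subtopology X S) X (\<lambda>x. H (x, 1))"
    using continuous_map_compose[OF _ H] by (simp add: o_def)
  then show ?thesis
    using assms by (auto simp: continuous_map_in_subtopology deforms_into_def)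
qed

text \<open>The value at 0 is x itself rather than H (x, 0) or K (x, 0), which equal x only on the
  respective domains.\<close>

definition splice_homotopies :: "('a \<times> real \<Rightarrow> 'a) \<Rightarrow> ('a \<times> real \<Rightarrow> 'a) \<Rightarrow> 'a \<times> real \<Rightarrow> 'a" where
  "splice_homotopies H K = (\<lambda>(x, v). if v = 0 then x else if v < 0 then H (x, - v) else K (x, v))"

lemma continuous_map_splice_homotopies:
  assumes H: "continuous_map (prod_topology (subtopology X U) (top_of_set {0..1::real})) X H"
    and K: "continuous_map (prod_topology (subtopology X V) (top_of_set {0..1::real})) X K"
    and H0: "\<forall>x\<in>U. H (x, 0) = x" and K0: "\<forall>x\<in>V. K (x, 0) = x"
  shows "continuous_map (prod_topology (subtopology X (U \<inter> V)) (top_of_set {-1..1::real})) X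
           (splice_homotopies H K)"
proof -
  let ?Z = "prod_topology (subtopology X (U \<inter> V)) (top_of_set {-1..1::real})"
  have snd_cont: "continuous_map ?Z euclideanreal snd"
    using continuous_map_snd continuous_map_into_fulltopology by blast
  have fst_cont: "continuous_map (subtopology ?Z S) (subtopology X (U \<inter> V)) fst" for S
    by (rule continuous_map_from_subtopology[OF continuous_map_fst])
  have "continuous_map ?Z X (\<lambda>p. if snd p \<le> 0 then H (fst p, - snd p) else K (fst p, snd p))"
  proof (rule continuous_map_cases_le[OF snd_cont continuous_map_const[THEN iffD2]])
    let ?N = "subtopology ?Z {p \<in> topspace ?Z. snd p \<le> 0}"
    have "continuous_map ?N (prod_topology (subtopology X U) (top_of_set {0..1})) (\<lambda>p. (fst p, - snd p))"
      using fst_cont[of "{p \<in> topspace ?Z. snd p \<le> 0}"] continuous_map_from_subtopology[OF snd_cont]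
      by (auto simp: continuous_map_paired continuous_map_in_subtopology intro!: continuous_intros)
    then show "continuous_map ?N X (\<lambda>p. H (fst p, - snd p))"
      using continuous_map_compose[OF _ H] by (simp add: o_def)
    let ?P = "subtopology ?Z {p \<in> topspace ?Z. 0 \<le> snd p}"
    have "continuous_map ?P (prod_topology (subtopology X V) (top_of_set {0..1})) (\<lambda>p. (fst p, snd p))"
      unfolding continuous_map_paired
      using fst_cont[of "{p \<in> topspace ?Z. 0 \<le> snd p}"] continuous_map_from_subtopology[OF snd_cont]
      by (auto simp: continuous_map_in_subtopology)
    then show "continuous_map ?P X (\<lambda>p. K (fst p, snd p))"
      using continuous_map_compose[OF _ K] by (simp add: o_def)
    show "H (fst p, - snd p) = K (fst p, snd p)" if "p \<in> topspace ?Z" "snd p = 0" for p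
      using that H0 K0 by auto
  qed auto
  then show ?thesis
    by (rule continuous_map_eq) (use H0 K0 in \<open>auto simp: splice_homotopies_def\<close>)
qed

locale join_extension =
  fixes X :: "'a topology" and A :: "'a set" and G :: "'a gpt topology"
    and U :: "'a set" and H :: "'a \<times> real \<Rightarrow> 'a"
    and W :: "'a set" and s :: "'a \<Rightarrow> 'a gpt" and K :: "'a \<times> real \<Rightarrow> 'a"
    and \<tau> :: "'a \<Rightarrow> real" and P :: "'a set" and Q :: "'a set"
  assumes A_subset: "A \<subseteq> topspace X"
    and openin_U: "openin X U" and deforms_U: "deforms_into X A U H"
    and openin_W: "openin X W" and section_W: "homotopy_section_on X G W s K"
    and continuous_\<tau>: "continuous_map X (top_of_set {0..1}) \<tau>"
    and openin_P: "openin X P" and P_subset: "P \<subseteq> U" and \<tau>_P: "\<And>x. x \<in> P \<Longrightarrow> \<tau> x = 0"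
    and openin_Q: "openin X Q" and Q_subset: "Q \<subseteq> W" and \<tau>_Q: "\<And>x. x \<in> Q \<Longrightarrow> \<tau> x = 1"
begin

definition join_section :: "'a \<Rightarrow> 'a gpt" where
  "join_section x =
     cyl_cls ((H (x, 1), restrict (\<lambda>u. splice_homotopies H K (x, 2 * u - 1)) {0..1}, s x), \<tau> x)"

definition join_homotopy :: "'a \<times> real \<Rightarrow> 'a" where
  "join_homotopy = (\<lambda>(x, r). splice_homotopies H K (x, r * (2 * \<tau> x - 1)))"

lemma \<tau>_range: "x \<in> topspace X \<Longrightarrow> 0 \<le> \<tau> x \<and> \<tau> x \<le> 1"
  using continuous_\<tau> by (auto simp: continuous_map_in_subtopology)

lemma continuous_\<tau>_real: "continuous_map X euclideanreal \<tau>"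
  using continuous_\<tau> by (simp add: continuous_map_in_subtopology)

lemma continuous_H: "continuous_map (prod_topology (subtopology X U) (top_of_set {0..1::real})) X H"
  and H_0: "x \<in> U \<Longrightarrow> H (x, 0) = x"
  using deforms_U by (auto simp: deforms_into_def)

lemma continuous_s: "continuous_map (subtopology X W) G s"
  and continuous_K: "continuous_map (prod_topology (subtopology X W) (top_of_set {0..1::real})) X K"
  and K_0: "x \<in> W \<Longrightarrow> K (x, 0) = x"
  and K_1: "x \<in> W \<Longrightarrow> K (x, 1) = gmap (s x)"
  using section_W by (auto simp: homotopy_section_on_def)

lemma continuous_map_splice:
  "continuous_map (prod_topology (subtopology X (U \<inter> W)) (top_of_set {-1..1::real})) X
     (splice_homotopies H K)"
  using continuous_H continuous_K H_0 K_0 by (intro continuous_map_splice_homotopies) auto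

lemma join_section_P: "x \<in> P \<Longrightarrow> join_section x = Pt (H (x, 1))"
  by (simp add: join_section_def cyl_cls_def \<tau>_P)

lemma join_section_Q: "x \<in> Q \<Longrightarrow> join_section x = Up (s x)"
  by (simp add: join_section_def cyl_cls_def \<tau>_Q)

lemma continuous_map_join_section_on_overlap:
  "continuous_map (subtopology X (U \<inter> W)) (join_top X A G) join_section"
proof -
  let ?R = "subtopology X (U \<inter> W)"
  let ?\<gamma> = "\<lambda>x. restrict (\<lambda>u. splice_homotopies H K (x, 2 * u - 1)) {0..1}"
  have "continuous_map (prod_topology ?R (top_of_set {0..1::real})) (prod_topology ?R (top_of_set {-1..1::real}))
          (\<lambda>(x, u). (x, 2 * u - 1))"
    by (auto simp: case_prod_unfold continuous_map_paired continuous_map_in_subtopology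
        intro!: continuous_intros continuous_map_into_fulltopology[OF continuous_map_fst]
          continuous_map_into_fulltopology[OF continuous_map_snd])
  from continuous_map_path_top_adjoint[OF continuous_map_compose[OF this continuous_map_splice]]
  have "continuous_map ?R (path_top X) ?\<gamma>"
    by (simp add: o_def case_prod_unfold)
  moreover have "continuous_map ?R (subtopology X A) (\<lambda>x. H (x, 1))"
    using continuous_map_deforms_into_end[OF deforms_U] by blast
  moreover have "continuous_map ?R G s"
    using continuous_s by (rule continuous_map_from_subtopology_mono) blast
  moreover have "?\<gamma> x 0 = H (x, 1) \<and> ?\<gamma> x 1 = gmap (s x)" if "x \<in> U \<inter> W" for x
    using that K_1 by (simp add: splice_homotopies_def)
  ultimately have "continuous_map ?R (hpb_top X A G) (\<lambda>x. (H (x, 1), ?\<gamma> x, s x))"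
    by (auto simp: hpb_top_def continuous_map_in_subtopology continuous_map_paired)
  moreover have "continuous_map ?R (top_of_set {0..1}) \<tau>"
    using continuous_\<tau> by (rule continuous_map_from_subtopology)
  ultimately have "continuous_map ?R (prod_topology (hpb_top X A G) (top_of_set {0..1})) (\<lambda>x. ((H (x, 1), ?\<gamma> x, s x), \<tau> x))"
    by (simp add: continuous_map_paired)
  from continuous_map_compose[OF this continuous_map_cyl_cls_join_top[OF A_subset]]
  show ?thesis
    by (simp add: o_def join_section_def[abs_def])
qed

lemma continuous_map_join_section:
  "continuous_map (subtopology X (P \<union> Q \<union> (U \<inter> W))) (join_top X A G) join_section"
proof -
  have "continuous_map (subtopology X P) (join_top X A G) (Pt \<circ> (\<lambda>x. H (x, 1)))"
    using continuous_map_deforms_into_end[OF deforms_U P_subset]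
      continuous_map_Pt_join_top[OF A_subset] by (rule continuous_map_compose)
  then have "continuous_map (subtopology X P) (join_top X A G) join_section"
    by (rule continuous_map_eq) (simp add: join_section_P)
  moreover have "continuous_map (subtopology X Q) (join_top X A G) (Up \<circ> s)"
    using continuous_map_from_subtopology_mono[OF continuous_s Q_subset]
      continuous_map_Up_join_top[OF A_subset] by (rule continuous_map_compose)
  then have "continuous_map (subtopology X Q) (join_top X A G) join_section"
    by (rule continuous_map_eq) (simp add: join_section_Q)
  ultimately show ?thesis
    using continuous_map_on_Union_openin[of "{P, Q, U \<inter> W}" X] openin_P openin_Q openin_U openin_W
      continuous_map_join_section_on_overlap by (auto simp: Un_assoc)
qed

lemma continuous_map_join_homotopy:
  "continuous_map (prod_topology (subtopology X (P \<union> Q \<union> (U \<inter> W))) (top_of_set {0..1})) X join_homotopy"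
proof -
  have "continuous_map (prod_topology (subtopology X P) (top_of_set {0..1})) X join_homotopy"
    using continuous_map_prod_subtopology_mono[OF continuous_H P_subset]
    by (rule continuous_map_eq) (use H_0 P_subset \<tau>_P in
        \<open>auto simp: join_homotopy_def splice_homotopies_def\<close>)
  moreover have "continuous_map (prod_topology (subtopology X Q) (top_of_set {0..1})) X join_homotopy"
    using continuous_map_prod_subtopology_mono[OF continuous_K Q_subset]
    by (rule continuous_map_eq) (use K_0 Q_subset \<tau>_Q in
        \<open>auto simp: join_homotopy_def splice_homotopies_def\<close>)
  moreover have "continuous_map (prod_topology (subtopology X (U \<inter> W)) (top_of_set {0..1})) X join_homotopy"
  proof -
    let ?R = "subtopology X (U \<inter> W)"
    have "continuous_map (prod_topology ?R (top_of_set {0..1::real})) euclideanreal (\<lambda>(x, r). \<tau> x)"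
      using continuous_map_compose[OF continuous_map_fst continuous_map_from_subtopology[OF continuous_\<tau>_real]]
      by (simp add: o_def case_prod_unfold)
    moreover have "r * (2 * \<tau> x - 1) \<in> {-1..1}" if "x \<in> topspace X" "0 \<le> r" "r \<le> 1" for x r
    proof -
      have "r * (2 * \<tau> x - 1) \<le> r * 1" "r * (- 1) \<le> r * (2 * \<tau> x - 1)"
        using \<tau>_range[OF that(1)] that(2) by (intro mult_left_mono; simp)+
      then show ?thesis
        using that(3) by simp
    qed
    ultimately have "continuous_map (prod_topology ?R (top_of_set {0..1::real})) (prod_topology ?R (top_of_set {-1..1::real}))
          (\<lambda>(x, r). (x, r * (2 * \<tau> x - 1)))"
      by (auto simp: case_prod_unfold continuous_map_paired continuous_map_in_subtopology
          intro!: continuous_intros continuous_map_into_fulltopology[OF continuous_map_fst]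
          continuous_map_into_fulltopology[OF continuous_map_snd])
    from continuous_map_compose[OF this continuous_map_splice]
    show ?thesis
      by (simp add: o_def case_prod_unfold join_homotopy_def)
  qed
  ultimately show ?thesis
    using continuous_map_prod_on_Union_openin[of "{P, Q, U \<inter> W}" X] openin_P openin_Q openin_U openin_W
    by (auto simp: Un_assoc)
qed

lemma join_homotopy_end:
  assumes "x \<in> P \<union> Q \<union> (U \<inter> W)"
  shows "join_homotopy (x, 1) = gmap (join_section x)"
proof -
  have x: "x \<in> topspace X"
    using assms openin_P openin_Q openin_U by (auto dest: openin_subset)
  consider "\<tau> x = 0" | "\<tau> x = 1" | "0 < \<tau> x" "\<tau> x < 1"
    using \<tau>_range[OF x] by fastforce
  then show ?thesis
  proof cases
    case 1
    then show ?thesis by (simp add: join_homotopy_def join_section_def splice_homotopies_def cyl_cls_def)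
  next
    case 2
    then have "x \<in> W"
      using assms \<tau>_P Q_subset by force
    then show ?thesis
      using 2 K_1 by (simp add: join_homotopy_def join_section_def splice_homotopies_def cyl_cls_def)
  next
    case 3
    then show ?thesis by (simp add: join_homotopy_def join_section_def splice_homotopies_def cyl_cls_def)
  qed
qed

lemma homotopy_section_on_join_section:
  "homotopy_section_on X (join_top X A G) (P \<union> Q \<union> (U \<inter> W)) join_section join_homotopy"
  unfolding homotopy_section_on_def
  using continuous_map_join_section continuous_map_join_homotopy join_homotopy_end
  by (simp add: join_homotopy_def splice_homotopies_def)

end

lemma exists_homotopy_section_on_join_top:
  assumes "normal_space X" and "A \<subseteq> topspace X"
    and "openin X U" and "deforms_into X A U H"
    and "openin X W" and "homotopy_section_on X G W s K"
    and "closedin X C" and "C \<subseteq> U" and "closedin X F" and "F \<subseteq> W"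
  shows "\<exists>V s' K'. openin X V \<and> C \<union> F \<subseteq> V \<and> V \<subseteq> U \<union> W \<and>
           homotopy_section_on X (join_top X A G) V s' K' \<and> (\<forall>x\<in>V - W. s' x = Pt (H (x, 1)))"
proof -
  have closed: "closedin X (topspace X - W)" and disjoint: "disjnt (topspace X - W) F"
    using assms(5,10) by (auto simp: disjnt_def)
  obtain t :: "'a \<Rightarrow> real" where t: "continuous_map X (top_of_set {0..1}) t"
    and t0: "t ` (topspace X - W) \<subseteq> {0}" and t1: "t ` F \<subseteq> {1}"
    using Urysohn_lemma[OF assms(1) closed assms(9) disjoint, of 0 1] by auto
  have t_real: "continuous_map X euclideanreal t"
    using t by (simp add: continuous_map_in_subtopology)
  \<comment> \<open>Clamping 3 t - 1 makes \<tau> constant on the open sets {t < 1/3} and {t > 2/3}.\<close>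
  define \<tau> where "\<tau> x = max 0 (min 1 (3 * t x - 1))" for x
  define P where "P = {x \<in> topspace X. t x \<in> {..<1/3}} \<inter> U"
  define Q where "Q = {x \<in> topspace X. t x \<in> {2/3<..}} \<inter> W"
  have "continuous_map X (top_of_set {0..1}) \<tau>"
    unfolding \<tau>_def continuous_map_in_subtopology by (auto intro!: continuous_intros t_real)
  moreover have "openin X P" "openin X Q"
    unfolding P_def Q_def using assms(3,5)
    by (auto intro!: openin_Int openin_continuous_map_preimage[OF t_real] simp del: lessThan_iff greaterThan_iff)
  ultimately interpret join_extension X A G U H W s K \<tau> P Q
    using assms by unfold_locales (auto simp: P_def Q_def \<tau>_def)
  have "C \<subseteq> P \<union> (U \<inter> W)"
    using assms(7,8) t0 closedin_subset[OF assms(7)] by (auto simp: P_def image_subset_iff)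
  moreover have "F \<subseteq> Q"
    using assms(10) t1 closedin_subset[OF assms(9)] by (auto simp: Q_def image_subset_iff)
  ultimately have "C \<union> F \<subseteq> P \<union> Q \<union> (U \<inter> W)"
    by blast
  moreover have "\<forall>x\<in>P \<union> Q \<union> (U \<inter> W) - W. join_section x = Pt (H (x, 1))"
    using Q_def join_section_P by auto
  moreover have "openin X (P \<union> Q \<union> (U \<inter> W))"
    using \<open>openin X P\<close> \<open>openin X Q\<close> assms(3,5) by auto
  ultimately show ?thesis
    using homotopy_section_on_join_section by (auto simp: P_def Q_def)
qed

lemma normal_space_closedin_Un_split:
  assumes "normal_space X" and "closedin X F" and "openin X U" and "openin X W" and "F \<subseteq> U \<union> W"
  obtains C F' where "closedin X C" "C \<subseteq> U" "closedin X F'" "F' \<subseteq> W" "F \<subseteq> C \<union> F'"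
proof -
  have "closedin X (F - U)" "F - U \<subseteq> W"
    using assms(2,3,5) by (auto intro: closedin_diff)
  then obtain V where V: "openin X V" "F - U \<subseteq> V" "X closure_of V \<subseteq> W"
    using assms(1,4) unfolding normal_space_alt by meson
  show thesis
  proof
    show "closedin X (F - V)"
      using assms(2) V(1) by (rule closedin_diff)
    show "F \<subseteq> (F - V) \<union> X closure_of V"
      using closure_of_subset[OF openin_subset[OF V(1)]] by blast
  qed (use V in auto)
qed

lemma exists_homotopy_section_on_ganea_top:
  assumes "normal_space X" and "A \<subseteq> topspace X"
    and "\<And>i. i \<le> m \<Longrightarrow> openin X (U i) \<and> deforms_into X A (U i) (H i)"
    and "closedin X F" and "F \<subseteq> (\<Union>i\<le>m. U i)"
  shows "\<exists>V s K. openin X V \<and> F \<subseteq> V \<and> V \<subseteq> (\<Union>i\<le>m. U i) \<and>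
           homotopy_section_on X (ganea_top X A m) V s K \<and>
           (\<forall>x\<in>V - (\<Union>i<m. U i). s x = Pt (H m (x, 1)))"
  using assms(3-5)
proof (induction m arbitrary: F)
  case 0
  then have U: "openin X (U 0)" and H: "deforms_into X A (U 0) (H 0)"
    by auto
  have "continuous_map (subtopology X (U 0)) (ganea_top X A 0) (Pt \<circ> (\<lambda>x. H 0 (x, 1)))"
    using continuous_map_deforms_into_end[OF H order_refl] continuous_map_Pt_ganea_top[OF assms(2)]
    by (rule continuous_map_compose)
  then have "homotopy_section_on X (ganea_top X A 0) (U 0) (\<lambda>x. Pt (H 0 (x, 1))) (H 0)"
    using H by (simp add: homotopy_section_on_def deforms_into_def o_def)
  then show ?case
    using U 0 by auto
next
  case (Suc m)
  have U: "openin X (U (Suc m))" and H: "deforms_into X A (U (Suc m)) (H (Suc m))"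
    using Suc.prems(1)[of "Suc m"] by auto
  have prems_m: "\<And>i. i \<le> m \<Longrightarrow> openin X (U i) \<and> deforms_into X A (U i) (H i)"
    using Suc.prems(1) by simp
  then have "openin X (\<Union>i\<le>m. U i)"
    by blast
  moreover have "F \<subseteq> U (Suc m) \<union> (\<Union>i\<le>m. U i)"
    using Suc.prems(3) by (simp add: atMost_Suc)
  ultimately obtain C F' where C: "closedin X C" "C \<subseteq> U (Suc m)"
    and F': "closedin X F'" "F' \<subseteq> (\<Union>i\<le>m. U i)" and F: "F \<subseteq> C \<union> F'"
    using normal_space_closedin_Un_split[OF assms(1) Suc.prems(2) U] by metis
  obtain V' s' K' where V': "openin X V'" "F' \<subseteq> V'" "V' \<subseteq> (\<Union>i\<le>m. U i)"
    and s': "homotopy_section_on X (ganea_top X A m) V' s' K'"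
    using Suc.IH[OF prems_m F'] by blast
  obtain V s K where V: "openin X V" "C \<union> F' \<subseteq> V" "V \<subseteq> U (Suc m) \<union> V'"
    and s: "homotopy_section_on X (join_top X A (ganea_top X A m)) V s K"
    and s_off: "\<forall>x\<in>V - V'. s x = Pt (H (Suc m) (x, 1))"
    using exists_homotopy_section_on_join_top[OF assms(1,2) U H V'(1) s' C F'(1) V'(2)] by metis
  have "V - (\<Union>i<Suc m. U i) \<subseteq> V - V'"
    using V'(3) by (auto simp: lessThan_Suc_atMost)
  then have "\<forall>x\<in>V - (\<Union>i<Suc m. U i). s x = Pt (H (Suc m) (x, 1))"
    using s_off by blast
  moreover have "V \<subseteq> (\<Union>i\<le>Suc m. U i)"
    using V(3) V'(3) by (auto simp: atMost_Suc)
  moreover have "homotopy_section_on X (ganea_top X A (Suc m)) V s K"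
    using s by simp
  moreover have "F \<subseteq> V"
    using V(2) F by blast
  ultimately show ?case
    using V(1) by blast
qed

lemma ganea_sectionI:
  assumes "homotopy_section_on X (ganea_top X A n) (topspace X) s K" and "A \<subseteq> topspace X"
    and "\<And>a. a \<in> A \<Longrightarrow> s a = Pt (f a)"
    and "homotopic_with (\<lambda>_. True) (subtopology X A) (subtopology X A) f id"
  shows "ganea_section X A n"
proof -
  have s: "continuous_map X (ganea_top X A n) s"
    and K: "continuous_map (prod_topology X (top_of_set {0..1::real})) X K"
    and K_ends: "\<And>x. x \<in> topspace X \<Longrightarrow> K (x, 0) = x \<and> K (x, 1) = gmap (s x)"
    using assms(1) by (auto simp: homotopy_section_on_def)
  have "continuous_map (prod_topology (top_of_set {0..1::real}) X) X (K \<circ> (\<lambda>(t, x). (x, t)))"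
    using homeomorphic_imp_continuous_map[OF homeomorphic_map_swap] K by (rule continuous_map_compose)
  then have "homotopic_with (\<lambda>_. True) X X (\<lambda>x. K (x, 0)) (\<lambda>x. K (x, 1))"
    unfolding homotopic_with_def by (intro exI[of _ "K \<circ> (\<lambda>(t, x). (x, t))"]) auto
  then have "homotopic_with (\<lambda>_. True) X X id (gmap \<circ> s)"
    by (rule homotopic_with_eq) (simp_all add: K_ends)
  moreover have "homotopic_with (\<lambda>_. True) (subtopology X A) (ganea_top X A n) (Pt \<circ> f) (Pt \<circ> id)"
    using assms(4) continuous_map_Pt_ganea_top[OF assms(2)] by (rule homotopic_with_compose_continuous_map_left) auto
  then have "homotopic_with (\<lambda>_. True) (subtopology X A) (ganea_top X A n) s Pt"
    by (rule homotopic_with_eq) (use assms(3) in auto)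
  ultimately show ?thesis
    unfolding ganea_section_def using s homotopic_with_symD by blast
qed

lemma image_diff_atMost: "(\<lambda>i. n - i) ` {..n} = {..n::nat}"
proof (intro set_eqI iffI)
  show "x \<in> (\<lambda>i. n - i) ` {..n}" if "x \<in> {..n}" for x
    using that by (intro image_eqI[of _ _ "n - x"]) auto
qed auto

lemma image_diff_lessThan: "(\<lambda>i. n - i) ` {..<n} = {1..n::nat}"
proof (intro set_eqI iffI)
  show "x \<in> (\<lambda>i. n - i) ` {..<n}" if "x \<in> {1..n}" for x
    using that by (intro image_eqI[of _ _ "n - x"]) auto
qed auto

lemma exists_homotopy_section_on_topspace:
  assumes "normal_space X" and "A \<subseteq> topspace X"
    and "\<And>i. i \<le> n \<Longrightarrow> openin X (U i)" and "(\<Union>i\<le>n. U i) = topspace X"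
    and "\<And>i. i \<le> n \<Longrightarrow> deforms_into X A (U i) (H i)"
  shows "\<exists>s K. homotopy_section_on X (ganea_top X A n) (topspace X) s K \<and>
           (\<forall>x\<in>topspace X - (\<Union>i\<in>{1..n}. U i). s x = Pt (H 0 (x, 1)))"
proof -
  \<comment> \<open>U 0 has to be attached last, so the cover is enumerated backwards.\<close>
  have "(\<Union>i\<le>n. U (n - i)) = topspace X" "(\<Union>i<n. U (n - i)) = (\<Union>i\<in>{1..n}. U i)"
    using assms(4) by (simp_all add: image_diff_atMost image_diff_lessThan flip: image_image[of U "\<lambda>i. n - i"])
  moreover have "\<exists>V s K. openin X V \<and> topspace X \<subseteq> V \<and> V \<subseteq> (\<Union>i\<le>n. U (n - i)) \<and>
          homotopy_section_on X (ganea_top X A n) V s K \<and>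
          (\<forall>x\<in>V - (\<Union>i<n. U (n - i)). s x = Pt (H (n - n) (x, 1)))"
    by (rule exists_homotopy_section_on_ganea_top[OF assms(1,2)]) (use assms(3,5) calculation in auto)
  ultimately show ?thesis
    by (metis diff_self_eq_0 subset_antisym)
qed

theorem lemma3p6:
  fixes X :: "'a topology" and A :: "'a set" and U :: "nat \<Rightarrow> 'a set" and n :: nat
  assumes "normal_space X"
    and "cofibration X A"
    and "\<And>i. i \<le> n \<Longrightarrow> openin X (U i)"
    and "(\<Union>i\<le>n. U i) = topspace X"
    and "A \<subseteq> U 0"
    and "\<exists>H0. continuous_map (prod_topology (subtopology X (U 0)) (top_of_set {0..1::real})) X H0 \<and>
              (\<forall>x\<in>U 0. H0 (x, 0) = x \<and> H0 (x, 1) \<in> A) \<and>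
              homotopic_with (\<lambda>_. True) (subtopology X A) (subtopology X A) (\<lambda>a. H0 (a, 1)) id"
    and "\<And>i. 1 \<le> i \<Longrightarrow> i \<le> n \<Longrightarrow> U i \<inter> A = {} \<and>
            (\<exists>Hi. continuous_map (prod_topology (subtopology X (U i)) (top_of_set {0..1::real})) X Hi \<and>
                  (\<forall>x\<in>U i. Hi (x, 0) = x \<and> Hi (x, 1) \<in> A))"
  shows "relcat X A \<le> enat n"
proof -
  have A: "A \<subseteq> topspace X"
    using assms(2) by (simp add: cofibration_def)
  obtain H0 where H0: "deforms_into X A (U 0) H0"
    and H0_A: "homotopic_with (\<lambda>_. True) (subtopology X A) (subtopology X A) (\<lambda>a. H0 (a, 1)) id"
    using assms(6) by (auto simp: deforms_into_def)
  define H where "H i = (if i = 0 then H0 else SOME H. deforms_into X A (U i) H)" for i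
  have Hi: "\<exists>H. deforms_into X A (U i) H" if "1 \<le> i" "i \<le> n" for i
    using assms(7)[OF that] by (auto simp: deforms_into_def)
  have deforms: "deforms_into X A (U i) (H i)" if "i \<le> n" for i
    using H0 Hi[of i] that by (cases "i = 0") (simp_all add: H_def someI_ex)
  obtain s K where s: "homotopy_section_on X (ganea_top X A n) (topspace X) s K"
    and s_off: "\<forall>x\<in>topspace X - (\<Union>i\<in>{1..n}. U i). s x = Pt (H0 (x, 1))"
    using exists_homotopy_section_on_topspace[OF assms(1) A assms(3,4) deforms] by (auto simp: H_def)
  have "U i \<inter> A = {}" if "i \<in> {1..n}" for i
    using assms(7) that by simp
  then have "A \<inter> (\<Union>i\<in>{1..n}. U i) = {}"
    by blast
  then have "ganea_section X A n"
    using ganea_sectionI[OF s A _ H0_A] s_off A by blast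
  then show ?thesis
    unfolding relcat_def by (simp add: INF_lower)
qed

end
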